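(* Let $D$ be a checkerboard colorable virtual link diagram and let $G_D$ be a signed Tait graph of $D$. Then $\langle D\rangle(A,B,d)=F[G_D](A,B,d)$.
   Context: A virtual link diagram is a plane curve with real crossings and virtual crossings. It is checkerboard colorable if one can color a small neighbourhood of one side of each arc so that near each real crossing the colored sides alternate, and near each virtual crossing the colorings of the two strands pass through independently. Bracket polynomial: $\langle D\rangle(A,B,d)=\sum_{\sigma}A^{\alpha(\sigma)}B^{\beta(\sigma)}d^{|\sigma|-1}$, the sum over all states $\sigma$ (choice of $A$- or $B$-smoothing at every real crossing), $\alpha(\sigma),\beta(\sigma)$ the numbers of $A$- and $B$-smoothings, $|\sigma|$ the number of closed curves. Signed Tait graph (Chmutov–Pak): given a checkerboard coloring of $D$, thicken $D$ to a surface in which bands at virtual crossings pass without touching; the colored neighbourhoods form annuli whose exterior circles run along the diagram, jumping between strands at real crossings so that the two colored corners of each crossing lie on them. Replace each real crossing by an edge-ribbon joining the exterior-circle arcs at the two colored corners and glue discs along the interior circles. The result is an orientable signed ribbon graph (vertices = capped annuli, edges = real crossings, edge sign $+$ iff the $A$-smoothing of the crossing joins the two colored corners), i.e. a signed cyclic graph $G_D$ (cyclic graph: graph with cyclic ordering of half-edges at each vertex). The polynomial $F[G]$ of a signed cyclic graph $G$: edges may be "marked"; for an unmarked edge $e$, $G-e$ deletes $e$ and $G(\bar e)$ keeps $e$ and marks it; $F[G]=B\,F[G-e]+A\,F[G(\bar e)]$ if $e$ is positive, $F[G]=A\,F[G-e]+B\,F[G(\bar e)]$ if $e$ is negative; and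 if $H$ is a spanning subgraph (all vertices, a subset of edges with induced cyclic order) all of whose edges are marked, $F[H]=d^{bc(H)-1}$, with $bc(H)$ the number of boundary components of the ribbon graph of $H$. *)

theory Defs
  imports Main
begin

text \<open>A virtual link diagram, up to detour moves (which do not affect the bracket nor the
Tait graph construction), is recorded by: its finite set of real crossings; at each real
crossing c four ends (c,0),(c,1),(c,2),(c,3), numbered counterclockwise in the plane, the
ends 0 and 2 belonging to the over-strand and 1 and 3 to the under-strand; the arcs of the
diagram, given by the fixed-point-free involution lnk on ends (lnk x is the other end of the
arc starting at x; virtual crossings are just where arcs pass over each other);
and the number of closed components without real crossings.\<close>

record 'c vdiag =
  cross :: "'c set"
  lnk :: "'c \<times> nat \<Rightarrow> 'c \<times> nat"
  nloops :: nat

definition ends :: "'c vdiag \<Rightarrow> ('c \<times> nat) set" where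
  "ends D = cross D \<times> {0..<4}"

definition virtual_link_diagram :: "'c vdiag \<Rightarrow> bool" where
  "virtual_link_diagram D \<longleftrightarrow> finite (cross D) \<and>
     (\<forall>x\<in>ends D. lnk D x \<in> ends D \<and> lnk D (lnk D x) = x \<and> lnk D x \<noteq> x)"

text \<open>A state is given by the set S of A-smoothed crossings.  The A-smoothing joins the
A-regions (corners 0 and 2, i.e. the corners swept by the over-strand rotating
counterclockwise), so it pairs the ends (0,3) and (1,2); the B-smoothing pairs (0,1),(2,3).\<close>

definition smooth :: "'c set \<Rightarrow> 'c \<times> nat \<Rightarrow> 'c \<times> nat" where
  "smooth S = (\<lambda>(c, i). if c \<in> S then (c, 3 - i) else (c, if even i then i + 1 else i - 1))"

text \<open>Closed curves of a state: connected components of the ends under the arcs and the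
smoothing arcs, plus the crossingless components.\<close>
definition state_circles :: "'c vdiag \<Rightarrow> 'c set \<Rightarrow> nat" where
  "state_circles D S =
     card (ends D // (({(x, lnk D x) | x. x \<in> ends D} \<union> {(x, smooth S x) | x. x \<in> ends D})\<^sup>*))
     + nloops D"

definition bracket :: "'c vdiag \<Rightarrow> 'a::field \<Rightarrow> 'a \<Rightarrow> 'a \<Rightarrow> 'a" where
  "bracket D A B d = (\<Sum>S\<in>Pow (cross D).
      A ^ card S * B ^ card (cross D - S) * d powi (int (state_circles D S) - 1))"

text \<open>Vertices, half-edges with their vertex, the rotation (cyclic successor of a
half-edge at its vertex), the edge involution and the sign of (the edge of) a half-edge.\<close>
record ('v, 'h) scg =
  sverts :: "'v set"
  shalfs :: "'h set"
  svert :: "'h \<Rightarrow> 'v"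
  srot :: "'h \<Rightarrow> 'h"
  sopp :: "'h \<Rightarrow> 'h"
  ssign :: "'h \<Rightarrow> bool"

definition orbit :: "('h \<Rightarrow> 'h) \<Rightarrow> 'h \<Rightarrow> 'h set" where
  "orbit f x = {(f ^^ n) x | n. True}"

text \<open>Induced cyclic order on a subset K of the half-edges.\<close>
definition induced_rot :: "('h \<Rightarrow> 'h) \<Rightarrow> 'h set \<Rightarrow> 'h \<Rightarrow> 'h" where
  "induced_rot f K h = (f ^^ (LEAST n. 0 < n \<and> (f ^^ n) h \<in> K)) h"

definition delete_edge :: "('v, 'h) scg \<Rightarrow> 'h \<Rightarrow> ('v, 'h) scg" where
  "delete_edge G h = G\<lparr> shalfs := shalfs G - {h, sopp G h},
                       srot := induced_rot (srot G) (shalfs G - {h, sopp G h}) \<rparr>"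

text \<open>Number of boundary components of the ribbon graph: orbits of rotation after edge
involution (face permutation), plus one for each vertex carrying no half-edge.\<close>
definition bc :: "('v, 'h) scg \<Rightarrow> nat" where
  "bc G = card (orbit (srot G \<circ> sopp G) ` shalfs G)
          + card {v \<in> sverts G. \<forall>h\<in>shalfs G. svert G h \<noteq> v}"

text \<open>F with a set M of marked half-edges (an edge is marked when its half-edges are);
the unmarked edge to expand is chosen arbitrarily.\<close>
function Fm :: "'a::field \<Rightarrow> 'a \<Rightarrow> 'a \<Rightarrow> ('v, 'h) scg \<Rightarrow> 'h set \<Rightarrow> 'a" where
  "Fm A B d G M =
    (if \<not> finite (shalfs G) \<or> shalfs G \<subseteq> M then d powi (int (bc G) - 1)
     else (let h = (SOME h. h \<in> shalfs G - M); e = {h, sopp G h} in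
       if ssign G h then B * Fm A B d (delete_edge G h) M + A * Fm A B d G (M \<union> e)
       else A * Fm A B d (delete_edge G h) M + B * Fm A B d G (M \<union> e)))"
  by pat_completeness auto
termination
proof (relation "measure (\<lambda>(A, B, d, G, M). card (shalfs G - M))", goal_cases)
  case 1 then show ?case by simp
next
  case (2 A B d G M h e)
  then have "h \<in> shalfs G - M" by (metis Diff_eq_empty_iff some_in_eq)
  with 2 show ?case
    by (auto simp: delete_edge_def intro!: psubset_card_mono)
next
  case (3 A B d G M h e)
  then have "h \<in> shalfs G - M" by (metis Diff_eq_empty_iff some_in_eq)
  with 3 show ?case by (auto intro!: psubset_card_mono)
next
  case (4 A B d G M h e)
  then have "h \<in> shalfs G - M" by (metis Diff_eq_empty_iff some_in_eq)
  with 4 show ?case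
    by (auto simp: delete_edge_def intro!: psubset_card_mono)
next
  case (5 A B d G M h e)
  then have "h \<in> shalfs G - M" by (metis Diff_eq_empty_iff some_in_eq)
  with 5 show ?case by (auto intro!: psubset_card_mono)
qed

definition F :: "'a::field \<Rightarrow> 'a \<Rightarrow> 'a \<Rightarrow> ('v, 'h) scg \<Rightarrow> 'a" where
  "F A B d G = Fm A B d G {}"

text \<open>Corner (c,k) is the corner between ends k and (k+1) mod 4 at crossing c.  A colouring
(alternating at each real crossing) is determined by col c: the colored corners at c are
0 and 2 if col c, and 1 and 3 otherwise.\<close>
definition colored :: "('c \<Rightarrow> bool) \<Rightarrow> 'c \<times> nat \<Rightarrow> bool" where
  "colored col = (\<lambda>(c, k). (even k \<longleftrightarrow> col c))"

text \<open>Leaving crossing c outward along end i, corner i lies on the left; arriving at the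
other end (c',j) of the arc, the left side is corner (j+3) mod 4.  Each arc has exactly one
side colored, consistently along the arc (crossingless components can always be colored).\<close>
definition checkerboard :: "'c vdiag \<Rightarrow> ('c \<Rightarrow> bool) \<Rightarrow> bool" where
  "checkerboard D col \<longleftrightarrow>
     (\<forall>x\<in>ends D. colored col x = colored col (fst (lnk D x), (snd (lnk D x) + 3) mod 4))"

definition checkerboard_colorable :: "'c vdiag \<Rightarrow> bool" where
  "checkerboard_colorable D \<longleftrightarrow> (\<exists>col. checkerboard D col)"

text \<open>Traversing an exterior circle of the colored annuli with the colored side on the left:
from colored corner (c,k) leave c along end k, follow the arc to (c',j) and go round the
colored corner (c', (j+3) mod 4).\<close>
definition tait_next :: "'c vdiag \<Rightarrow> 'c \<times> nat \<Rightarrow> 'c \<times> nat" where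
  "tait_next D x = (fst (lnk D x), (snd (lnk D x) + 3) mod 4)"

definition tait_halfs :: "'c vdiag \<Rightarrow> ('c \<Rightarrow> bool) \<Rightarrow> ('c \<times> nat) set" where
  "tait_halfs D col = {x \<in> ends D. colored col x}"

definition A_corners :: "nat set" where
  "A_corners = {0, 2}"

text \<open>Signed Tait graph: vertices are the capped annuli (exterior circles passing real
crossings, plus one for each crossingless component); half-edges are the colored corners;
the cyclic order at a vertex is the order of the colored corners along its exterior circle
(in the orientation inherited from the plane); the edge at crossing c joins its two colored
corners, and is positive iff the A-smoothing joins the two colored corners.\<close>
definition tait_graph :: "'c vdiag \<Rightarrow> ('c \<Rightarrow> bool) \<Rightarrow> (('c \<times> nat) set + nat, 'c \<times> nat) scg" where
  "tait_graph D col =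
    \<lparr> sverts = Inl ` (orbit (tait_next D) ` tait_halfs D col) \<union> Inr ` {..<nloops D},
      shalfs = tait_halfs D col,
      svert = (\<lambda>h. Inl (orbit (tait_next D) h)),
      srot = tait_next D,
      sopp = (\<lambda>(c, k). (c, (k + 2) mod 4)),
      ssign = (\<lambda>(c, k). \<forall>j\<in>A_corners. colored col (c, j)) \<rparr>"

end

(* A state S is matched with the spanning subgraph of the Tait graph whose edges are the crossings
   where the smoothing of S joins the two colored corners; the state weight A^|S| B^(n-|S|) is then
   the weight with which the deletion/marking recursion of F produces that subgraph.  It remains to
   show that the number of state circles is the number of boundary components of the subgraph.
   Walking along a state circle, the colored corners it passes form exactly one orbit of the
   permutation "move to the next colored corner along the exterior circle, and over to the opposite
   corner if that crossing is an edge".  Orbits of this permutation missing all edges are exterior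
   circles of isolated vertices.  On the edge half-edges, the first-return map of the permutation
   is the rotation induced on the subgraph followed by the edge involution, which is conjugate to
   the face permutation of the ribbon graph.  Iterated deletion yields this induced rotation because
   first returns to nested sets compose. *)

theory Submission
  imports Defs
begin

lemma orbit_iff: "y \<in> orbit f x \<longleftrightarrow> (\<exists>n. y = (f ^^ n) x)"
  unfolding orbit_def by auto

lemma funpow_in_orbit: "(f ^^ n) x \<in> orbit f x"
  unfolding orbit_iff by blast

lemma orbit_self: "x \<in> orbit f x"
  using funpow_in_orbit[of 0] by simp

lemma apply_in_orbit: "f x \<in> orbit f x"
  using funpow_in_orbit[of 1] by simp

lemma funpow_in_invariant: "\<forall>y\<in>S. f y \<in> S \<Longrightarrow> x \<in> S \<Longrightarrow> (f ^^ n) x \<in> S"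
  by (induction n) auto

lemma orbit_subset_invariant: "\<forall>y\<in>S. f y \<in> S \<Longrightarrow> x \<in> S \<Longrightarrow> orbit f x \<subseteq> S"
  unfolding orbit_def using funpow_in_invariant[of S f x] by blast

lemma orbit_mono: "y \<in> orbit f x \<Longrightarrow> orbit f y \<subseteq> orbit f x"
proof
  fix z assume "y \<in> orbit f x" "z \<in> orbit f y"
  then obtain m n where "y = (f ^^ m) x" "z = (f ^^ n) y" unfolding orbit_iff by blast
  then have "z = (f ^^ (n + m)) x" by (simp add: funpow_add)
  then show "z \<in> orbit f x" unfolding orbit_iff by blast
qed

lemma funpow_cong_invariant:
  assumes "\<forall>y\<in>S. f y \<in> S" "\<forall>y\<in>S. f y = g y" "x \<in> S"
  shows "(f ^^ n) x = (g ^^ n) x"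
proof (induction n)
  case (Suc n)
  then show ?case using funpow_in_invariant[OF assms(1,3), of n] assms(2) by simp
qed simp

lemma orbit_cong_invariant:
  assumes "\<forall>y\<in>S. f y \<in> S" "\<forall>y\<in>S. f y = g y" "x \<in> S"
  shows "orbit f x = orbit g x"
  using funpow_cong_invariant[OF assms] unfolding orbit_def by simp

section \<open>First returns\<close>

definition return_time :: "('a \<Rightarrow> 'a) \<Rightarrow> 'a set \<Rightarrow> 'a \<Rightarrow> nat" where
  "return_time f K h = (LEAST n. 0 < n \<and> (f ^^ n) h \<in> K)"

lemma induced_rot_return_time: "induced_rot f K h = (f ^^ return_time f K h) h"
  unfolding induced_rot_def return_time_def ..

context
  fixes f :: "'a \<Rightarrow> 'a" and K h
  assumes returns: "\<exists>n>0. (f ^^ n) h \<in> K"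
begin

lemma return_time_pos: "0 < return_time f K h"
  unfolding return_time_def using LeastI_ex[OF returns] by blast

lemma funpow_return_time_in: "(f ^^ return_time f K h) h \<in> K"
  unfolding return_time_def using LeastI_ex[OF returns] by blast

lemma induced_rot_in: "induced_rot f K h \<in> K"
  using funpow_return_time_in by (simp add: induced_rot_return_time)

lemma funpow_before_return_time: "0 < j \<Longrightarrow> j < return_time f K h \<Longrightarrow> (f ^^ j) h \<notin> K"
  unfolding return_time_def using not_less_Least by blast

lemma return_time_le: "0 < n \<Longrightarrow> (f ^^ n) h \<in> K \<Longrightarrow> return_time f K h \<le> n"
  unfolding return_time_def by (simp add: Least_le)

end

lemma return_time_eqI:
  assumes "0 < i" "(f ^^ i) h \<in> K" "\<forall>j. 0 < j \<and> j < i \<longrightarrow> (f ^^ j) h \<notin> K"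
  shows "return_time f K h = i"
  unfolding return_time_def
  by (rule Least_equality) (use assms not_le in auto)

lemma return_time_skip:
  assumes "\<forall>j. 0 < j \<and> j \<le> m \<longrightarrow> (f ^^ j) h \<notin> K" and "\<exists>n>0. (f ^^ n) ((f ^^ m) h) \<in> K"
  shows "return_time f K h = m + return_time f K ((f ^^ m) h)"
proof (rule return_time_eqI)
  let ?r = "return_time f K ((f ^^ m) h)"
  have shift: "(f ^^ (m + j)) h = (f ^^ j) ((f ^^ m) h)" for j
    by (simp add: funpow_add add.commute[of m])
  show "0 < m + ?r" using return_time_pos[OF assms(2)] by simp
  show "(f ^^ (m + ?r)) h \<in> K" using funpow_return_time_in[OF assms(2)] by (simp only: shift)
  show "\<forall>j. 0 < j \<and> j < m + ?r \<longrightarrow> (f ^^ j) h \<notin> K"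
  proof (intro allI impI)
    fix j assume j: "0 < j \<and> j < m + ?r"
    show "(f ^^ j) h \<notin> K"
    proof (cases "j \<le> m")
      case False
      then have "(f ^^ j) h = (f ^^ (j - m)) ((f ^^ m) h)" using shift[of "j - m"] by simp
      then show ?thesis using funpow_before_return_time[OF assms(2), of "j - m"] j False by simp
    qed (use assms(1) j in blast)
  qed
qed

lemma induced_rot_skip:
  assumes "\<forall>j. 0 < j \<and> j \<le> m \<longrightarrow> (f ^^ j) h \<notin> K" and "\<exists>n>0. (f ^^ n) ((f ^^ m) h) \<in> K"
  shows "induced_rot f K h = induced_rot f K ((f ^^ m) h)"
  using return_time_skip[OF assms]
  by (simp add: induced_rot_return_time funpow_add add.commute[of m])

lemma induced_rot_cong_invariant:
  assumes "\<forall>y\<in>S. f y \<in> S" "\<forall>y\<in>S. f y = g y" "h \<in> S"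
  shows "induced_rot f K h = induced_rot g K h"
  unfolding induced_rot_def using funpow_cong_invariant[OF assms] by simp

lemma induced_rot_eq_apply: "f h \<in> K \<Longrightarrow> induced_rot f K h = f h"
  using return_time_eqI[of 1 f h K] by (simp add: induced_rot_return_time)

section \<open>Permutations of a finite set\<close>

locale perm_on =
  fixes H :: "'a set" and f :: "'a \<Rightarrow> 'a"
  assumes finite_domain: "finite H" and closed: "\<forall>x\<in>H. f x \<in> H" and inj: "inj_on f H"
begin

lemma bij_betw_funpow_domain: "bij_betw (f ^^ n) H H"
proof -
  have "f ` H = H" using endo_inj_surj[OF finite_domain _ inj] closed by blast
  then show ?thesis using bij_betw_funpow inj unfolding bij_betw_def by blast
qed

text \<open>Extending f by the identity outside H gives an injective function on the whole type, to
  which the library's periodicity result applies.\<close>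
lemma periodic: assumes "x \<in> H" shows "\<exists>n>0. (f ^^ n) x = x"
proof -
  define p where "p y = (if y \<in> H then f y else y)" for y
  have "inj p"
  proof (rule injI)
    fix y z assume "p y = p z"
    then show "y = z" using closed inj unfolding p_def inj_on_def by (auto split: if_splits)
  qed
  have agree: "(f ^^ n) x = (p ^^ n) x" for n
    by (rule funpow_cong_invariant[of H]) (use closed assms p_def in auto)
  have "{y. \<exists>n. y = (p ^^ n) x} \<subseteq> H"
    using funpow_in_invariant[OF closed assms] agree by auto
  then have "finite {y. \<exists>n. y = (p ^^ n) x}" using finite_domain finite_subset by blast
  then obtain n where "n > 0" "(p ^^ n) x = x" using funpow_inj_finite[OF \<open>inj p\<close>] by blast
  then show ?thesis using agree by metis
qed

lemma orbit_sym: assumes "x \<in> H" "y \<in> orbit f x" shows "x \<in> orbit f y"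
proof -
  obtain p where p: "p > 0" "(f ^^ p) x = x" using periodic[OF assms(1)] by blast
  obtain m where m: "y = (f ^^ m) x" using assms(2) unfolding orbit_iff by blast
  have "((f ^^ p) ^^ m) x = x" using p(2) by (induction m) simp_all
  then have "(f ^^ ((p - 1) * m + m)) x = x" using p(1) by (simp add: funpow_mult algebra_simps)
  then have "x = (f ^^ ((p - 1) * m)) y" using m by (simp add: funpow_add)
  then show ?thesis unfolding orbit_iff by blast
qed

lemma orbit_eq: assumes "x \<in> H" "y \<in> orbit f x" shows "orbit f y = orbit f x"
  using orbit_mono[OF assms(2)] orbit_mono[OF orbit_sym[OF assms]] by (rule subset_antisym)

lemma image_orbit: assumes "x \<in> H" shows "f ` orbit f x = orbit f x"
proof
  show "f ` orbit f x \<subseteq> orbit f x"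
  proof
    fix z assume "z \<in> f ` orbit f x"
    then obtain y where y: "y \<in> orbit f x" "z = f y" by blast
    then show "z \<in> orbit f x" using orbit_mono[OF y(1)] apply_in_orbit[of f y] by blast
  qed
  show "orbit f x \<subseteq> f ` orbit f x"
  proof
    fix y assume y: "y \<in> orbit f x"
    then have "y \<in> H" using orbit_subset_invariant[OF closed assms] by blast
    then obtain p where p: "p > 0" "(f ^^ p) y = y" using periodic by blast
    then have "f ((f ^^ (p - 1)) y) = y" by (metis Suc_pred' funpow.simps(2) o_apply)
    moreover have "(f ^^ (p - 1)) y \<in> orbit f x"
      using orbit_mono[OF y] funpow_in_orbit[of "p - 1" f y] by blast
    ultimately show "y \<in> f ` orbit f x" by (metis imageI)
  qed
qed

lemma returns: assumes "x \<in> H" "orbit f x \<inter> K \<noteq> {}" shows "\<exists>n>0. (f ^^ n) x \<in> K"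
proof -
  obtain m where m: "(f ^^ m) x \<in> K" using assms(2) unfolding orbit_def by blast
  obtain p where p: "p > 0" "(f ^^ p) x = x" using periodic[OF assms(1)] by blast
  have "(f ^^ (m + p)) x = (f ^^ m) x" using p(2) by (simp add: funpow_add)
  then show ?thesis using m p(1) by (metis add_gr_0)
qed

lemma returns_self: "x \<in> H \<Longrightarrow> x \<in> K \<Longrightarrow> \<exists>n>0. (f ^^ n) x \<in> K"
  using returns[of x K] orbit_self[of x f] by blast

lemma perm_on_induced_rot: assumes "K \<subseteq> H" shows "perm_on K (induced_rot f K)"
proof
  show "finite K" using finite_domain assms finite_subset by blast
  show "\<forall>h\<in>K. induced_rot f K h \<in> K" using induced_rot_in[OF returns_self] assms by blast
  show "inj_on (induced_rot f K) K"
  proof (rule inj_onI)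
    have le_case: "h = h'"
      if hK: "h \<in> K" "h' \<in> K" and eq: "induced_rot f K h = induced_rot f K h'"
        and le: "return_time f K h \<le> return_time f K h'" for h h'
    proof -
      define m m' where "m = return_time f K h" and "m' = return_time f K h'"
      have hH: "h \<in> H" "h' \<in> H" using hK assms by blast+
      have "(f ^^ (m' - m)) h' \<in> H" using funpow_in_invariant[OF closed hH(2)] .
      have "(f ^^ m') h' = (f ^^ (m + (m' - m))) h'" using le unfolding m_def m'_def by simp
      then have "(f ^^ m) h = (f ^^ m) ((f ^^ (m' - m)) h')"
        using eq unfolding induced_rot_return_time m_def m'_def by (simp add: funpow_add)
      then have h: "h = (f ^^ (m' - m)) h'"
        using bij_betw_funpow_domain[of m] hH(1) \<open>(f ^^ (m' - m)) h' \<in> H\<close>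
        unfolding bij_betw_def inj_on_def by blast
      have "m > 0" unfolding m_def using return_time_pos[OF returns_self[OF hH(1) hK(1)]] .
      moreover have "(f ^^ j) h' \<notin> K" if "0 < j" "j < m'" for j
        using funpow_before_return_time[OF returns_self[OF hH(2) hK(2)] that[unfolded m'_def]] .
      ultimately show "h = h'" using h hK(1) by (cases "m' - m = 0") auto
    qed
    fix h h' assume "h \<in> K" "h' \<in> K" "induced_rot f K h = induced_rot f K h'"
    then show "h = h'" using le_case[of h h'] le_case[of h' h]
      by (cases "return_time f K h \<le> return_time f K h'") auto
  qed
qed

lemma induced_rot_in_orbit: "induced_rot f K h \<in> orbit f h"
  unfolding induced_rot_return_time by (rule funpow_in_orbit)

lemma orbit_induced_rot:
  assumes "K \<subseteq> H" "h \<in> K"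
  shows "orbit (induced_rot f K) h = orbit f h \<inter> K"
proof
  interpret rho: perm_on K "induced_rot f K" using perm_on_induced_rot[OF assms(1)] .
  have "(induced_rot f K ^^ n) h \<in> orbit f h" for n
  proof (induction n)
    case (Suc n)
    then show ?case
      using orbit_mono[OF Suc] induced_rot_in_orbit[of K "(induced_rot f K ^^ n) h"] by auto
  qed (simp add: orbit_self)
  then show "orbit (induced_rot f K) h \<subseteq> orbit f h \<inter> K"
    using funpow_in_invariant[OF rho.closed assms(2)] by (auto simp: orbit_def)
  have "(f ^^ n) h \<in> orbit (induced_rot f K) h" if "h \<in> K" "(f ^^ n) h \<in> K" for n h
    using that
  proof (induction n arbitrary: h rule: less_induct)
    case (less n)
    have ret: "\<exists>n>0. (f ^^ n) h \<in> K" using returns_self less.prems(1) assms(1) by blast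
    define r where "r = return_time f K h"
    show ?case
    proof (cases "n = 0")
      case False
      then have "r \<le> n" "0 < r" unfolding r_def using return_time_le[OF ret] return_time_pos[OF ret]
          less.prems by auto
      then have "(f ^^ n) h = (f ^^ (n - r)) (induced_rot f K h)"
        unfolding induced_rot_return_time r_def by (metis funpow_add le_add_diff_inverse2 o_apply)
      moreover have "induced_rot f K h \<in> K" using rho.closed less.prems by blast
      ultimately have "(f ^^ n) h \<in> orbit (induced_rot f K) (induced_rot f K h)"
        using less.IH[of "n - r"] less.prems \<open>0 < r\<close> \<open>r \<le> n\<close> False by simp
      then show ?thesis using orbit_mono[OF apply_in_orbit, of "induced_rot f K" h] by blast
    qed (simp add: orbit_self)
  qed
  then show "orbit f h \<inter> K \<subseteq> orbit (induced_rot f K) h"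
    using assms(2) by (auto simp: orbit_def)
qed

lemma card_orbits_split:
  assumes "K \<subseteq> H"
  shows "card (orbit f ` H) =
    card (orbit (induced_rot f K) ` K) + card {Q \<in> orbit f ` H. Q \<inter> K = {}}"
proof -
  have meeting: "{Q \<in> orbit f ` H. Q \<inter> K \<noteq> {}} = orbit f ` K"
  proof
    show "{Q \<in> orbit f ` H. Q \<inter> K \<noteq> {}} \<subseteq> orbit f ` K"
    proof
      fix Q assume "Q \<in> {Q \<in> orbit f ` H. Q \<inter> K \<noteq> {}}"
      then obtain x k where "x \<in> H" "Q = orbit f x" "k \<in> orbit f x" "k \<in> K" by blast
      then show "Q \<in> orbit f ` K" using orbit_eq[of x k] by blast
    qed
    show "orbit f ` K \<subseteq> {Q \<in> orbit f ` H. Q \<inter> K \<noteq> {}}"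
      using assms orbit_self[of _ f] by blast
  qed
  have "inj_on (\<lambda>Q. Q \<inter> K) (orbit f ` K)"
  proof (rule inj_onI)
    fix Q Q' assume "Q \<in> orbit f ` K" "Q' \<in> orbit f ` K" and eq: "Q \<inter> K = Q' \<inter> K"
    then obtain k k' where k: "k \<in> K" "Q = orbit f k" and k': "k' \<in> K" "Q' = orbit f k'" by blast
    then have "k' \<in> orbit f k" using eq orbit_self[of k' f] by blast
    then show "Q = Q'" using k k' orbit_eq[of k k'] assms by blast
  qed
  moreover have "orbit (induced_rot f K) ` K = (\<lambda>Q. Q \<inter> K) ` orbit f ` K"
    using orbit_induced_rot[OF assms] by (simp add: image_image)
  ultimately have card_meeting: "card (orbit f ` K) = card (orbit (induced_rot f K) ` K)"
    by (simp add: card_image)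
  have "orbit f ` H = orbit f ` K \<union> {Q \<in> orbit f ` H. Q \<inter> K = {}}"
    using meeting by blast
  moreover have "orbit f ` K \<inter> {Q \<in> orbit f ` H. Q \<inter> K = {}} = {}"
    using meeting by blast
  ultimately show ?thesis
    using card_Un_disjoint[of "orbit f ` K" "{Q \<in> orbit f ` H. Q \<inter> K = {}}"] finite_domain assms
      card_meeting by (simp add: finite_subset)
qed

text \<open>Iterated edge deletion therefore produces the cyclic order induced directly from the full
  graph.\<close>
lemma induced_rot_induced_rot:
  assumes "K' \<subseteq> K" "K \<subseteq> H" "h \<in> K'"
  shows "induced_rot (induced_rot f K) K' h = induced_rot f K' h"
proof -
  interpret rho: perm_on K "induced_rot f K" using perm_on_induced_rot[OF assms(2)] .
  let ?rho = "induced_rot f K"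
  have "induced_rot ?rho K' h = induced_rot f K' h" if "h \<in> K" "orbit f h \<inter> K' \<noteq> {}" for h
    using that
  proof (induction "return_time f K' h" arbitrary: h rule: less_induct)
    case less
    have rho_h_K: "?rho h \<in> K" using rho.closed less.prems(1) by blast
    have hH: "h \<in> H" "?rho h \<in> H" using less.prems(1) rho_h_K assms(2) by blast+
    have ret': "\<exists>n>0. (f ^^ n) h \<in> K'" using returns[OF hH(1) less.prems(2)] .
    have ret: "\<exists>n>0. (f ^^ n) h \<in> K" using ret' assms(1) by blast
    define m where "m = return_time f K h"
    have rho_h: "?rho h = (f ^^ m) h" unfolding m_def induced_rot_return_time ..
    have orbit_rho_h: "orbit f (?rho h) = orbit f h"
      using orbit_eq[OF hH(1) induced_rot_in_orbit] .
    have before_m: "(f ^^ j) h \<notin> K'" if "0 < j" "j < m" for j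
      using funpow_before_return_time[OF ret that[unfolded m_def]] assms(1) by blast
    show ?case
    proof (cases "?rho h \<in> K'")
      case True
      have "return_time ?rho K' h = 1" by (rule return_time_eqI) (use True in simp_all)
      then have "induced_rot ?rho K' h = ?rho h" by (simp add: induced_rot_return_time)
      moreover have "return_time f K' h = m"
      proof (rule return_time_eqI)
        show "0 < m" unfolding m_def using return_time_pos[OF ret] .
        show "(f ^^ m) h \<in> K'" using True rho_h by simp
      qed (use before_m in blast)
      then have "induced_rot f K' h = (f ^^ m) h" by (simp add: induced_rot_return_time)
      ultimately show ?thesis using rho_h by simp
    next
      case False
      have before: "\<forall>j. 0 < j \<and> j \<le> m \<longrightarrow> (f ^^ j) h \<notin> K'"
      proof (intro allI impI)
        fix j assume "0 < j \<and> j \<le> m"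
        then show "(f ^^ j) h \<notin> K'" using False rho_h before_m[of j] by (cases "j = m") auto
      qed
      have ret_rho_h: "\<exists>n>0. (f ^^ n) ((f ^^ m) h) \<in> K'"
        using returns[OF hH(2)] less.prems orbit_rho_h rho_h by simp
      have "return_time f K' (?rho h) < return_time f K' h"
        using return_time_skip[OF before ret_rho_h] return_time_pos[OF ret] rho_h m_def by simp
      then have IH: "induced_rot ?rho K' (?rho h) = induced_rot f K' (?rho h)"
        using less.hyps[of "?rho h"] less.prems(2) rho_h_K orbit_rho_h by simp
      have "orbit ?rho (?rho h) \<inter> K' = orbit f h \<inter> K'"
        using orbit_induced_rot[OF assms(2) rho_h_K] orbit_rho_h assms(1) by auto
      then have "\<exists>n>0. (?rho ^^ n) (?rho h) \<in> K'"
        using rho.returns[OF rho_h_K] less.prems(2) by simp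
      moreover have "\<forall>j. 0 < j \<and> j \<le> 1 \<longrightarrow> (?rho ^^ j) h \<notin> K'"
        using False by (auto simp: le_Suc_eq)
      ultimately have "induced_rot ?rho K' h = induced_rot ?rho K' (?rho h)"
        using induced_rot_skip[where m=1 and f="?rho" and K=K' and h=h] by simp
      also have "\<dots> = induced_rot f K' h"
        using IH induced_rot_skip[OF before ret_rho_h] rho_h by simp
      finally show ?thesis .
    qed
  qed
  then show ?thesis using assms orbit_self[of h f] by blast
qed

context
  fixes K :: "'a set" and sw g :: "'a \<Rightarrow> 'a"
  assumes K_subset: "K \<subseteq> H" and sw_closed: "\<forall>k\<in>K. sw k \<in> K"
    and sw_sw: "\<forall>k\<in>K. sw (sw k) = k"
    and g_twist: "\<forall>x\<in>H. g x = (if f x \<in> K then sw (f x) else f x)"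
begin

lemma perm_on_twist: "perm_on H g"
proof
  show "finite H" by (rule finite_domain)
  show "\<forall>x\<in>H. g x \<in> H" using g_twist closed sw_closed K_subset by auto
  show "inj_on g H"
  proof (rule inj_onI)
    fix x y assume xy: "x \<in> H" "y \<in> H" "g x = g y"
    have "f x = f y"
    proof (cases "f x \<in> K"; cases "f y \<in> K")
      assume "f x \<in> K" "f y \<in> K"
      then have "sw (sw (f x)) = sw (sw (f y))" using xy g_twist by simp
      then show ?thesis using \<open>f x \<in> K\<close> \<open>f y \<in> K\<close> sw_sw by simp
    qed (use xy g_twist sw_closed in \<open>simp_all, metis+\<close>)
    then show "x = y" using inj xy by (simp add: inj_on_def)
  qed
qed

lemma funpow_twist_eq:
  assumes "x \<in> H" "\<forall>j. 0 < j \<and> j \<le> n \<longrightarrow> (f ^^ j) x \<notin> K \<or> (g ^^ j) x \<notin> K"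
  shows "(g ^^ n) x = (f ^^ n) x"
  using assms(2)
proof (induction n)
  case (Suc n)
  have "(f ^^ n) x \<in> H" using funpow_in_invariant[OF closed assms(1)] .
  moreover have "(g ^^ n) x = (f ^^ n) x" using Suc by simp
  ultimately have
    "(g ^^ Suc n) x = (if (f ^^ Suc n) x \<in> K then sw ((f ^^ Suc n) x) else (f ^^ Suc n) x)"
    using g_twist by simp
  then show ?case using Suc.prems sw_closed by (cases "(f ^^ Suc n) x \<in> K") auto
qed simp

lemma avoiding_orbits_twist:
  "{Q \<in> orbit g ` H. Q \<inter> K = {}} = {Q \<in> orbit f ` H. Q \<inter> K = {}}"
proof -
  have same: "orbit g x = orbit f x"
    if x: "x \<in> H" and avoid: "orbit g x \<inter> K = {} \<or> orbit f x \<inter> K = {}" for x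
  proof -
    have "(g ^^ n) x = (f ^^ n) x" for n
      by (rule funpow_twist_eq[OF x])
        (use avoid funpow_in_orbit[of _ g x] funpow_in_orbit[of _ f x] in blast)
    then show ?thesis unfolding orbit_def by simp
  qed
  show ?thesis
  proof (intro set_eqI iffI)
    fix Q assume "Q \<in> {Q \<in> orbit g ` H. Q \<inter> K = {}}"
    then obtain x where "x \<in> H" "Q = orbit g x" "Q \<inter> K = {}" by blast
    then show "Q \<in> {Q \<in> orbit f ` H. Q \<inter> K = {}}" using same[of x] by auto
  next
    fix Q assume "Q \<in> {Q \<in> orbit f ` H. Q \<inter> K = {}}"
    then obtain x where "x \<in> H" "Q = orbit f x" "Q \<inter> K = {}" by blast
    then show "Q \<in> {Q \<in> orbit g ` H. Q \<inter> K = {}}" using same[of x] by auto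
  qed
qed

lemma induced_rot_twist:
  assumes "h \<in> K" shows "induced_rot g K h = sw (induced_rot f K h)"
proof -
  have hH: "h \<in> H" using assms K_subset by blast
  have ret: "\<exists>n>0. (f ^^ n) h \<in> K" using returns_self hH assms by blast
  define r where "r = return_time f K h"
  have r_pos: "0 < r" unfolding r_def using return_time_pos[OF ret] .
  have before: "(f ^^ j) h \<notin> K" if "0 < j" "j < r" for j
    using funpow_before_return_time[OF ret] that unfolding r_def by blast
  have eq_before: "(g ^^ j) h = (f ^^ j) h" if "j < r" for j
    by (rule funpow_twist_eq[OF hH]) (use before that in auto)
  obtain r' where r': "r = Suc r'" using r_pos gr0_implies_Suc by blast
  have "(f ^^ r') h \<in> H" using funpow_in_invariant[OF closed hH] .
  moreover have "(f ^^ r) h \<in> K" unfolding r_def using funpow_return_time_in[OF ret] .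
  ultimately have "(g ^^ r) h = sw ((f ^^ r) h)"
    using eq_before[of r'] g_twist r' by simp
  then have g_r: "(g ^^ r) h = sw (induced_rot f K h)"
    unfolding r_def induced_rot_return_time .
  have "return_time g K h = r"
  proof (rule return_time_eqI)
    show "(g ^^ r) h \<in> K" using g_r sw_closed induced_rot_in[OF ret] by simp
    show "\<forall>j. 0 < j \<and> j < r \<longrightarrow> (g ^^ j) h \<notin> K" using eq_before before by simp
  qed (rule r_pos)
  then show ?thesis using g_r by (simp add: induced_rot_return_time)
qed

lemma card_orbits_twist:
  "card (orbit g ` H) =
    card (orbit (sw \<circ> induced_rot f K) ` K) + card {Q \<in> orbit f ` H. Q \<inter> K = {}}"
proof -
  interpret g: perm_on H g by (rule perm_on_twist)
  interpret rho: perm_on K "induced_rot g K" by (rule g.perm_on_induced_rot[OF K_subset])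
  have "orbit (induced_rot g K) ` K = orbit (sw \<circ> induced_rot f K) ` K"
    by (rule image_cong[OF refl], rule orbit_cong_invariant[of K])
      (use rho.closed induced_rot_twist in auto)
  then show ?thesis
    using g.card_orbits_split[OF K_subset] avoiding_orbits_twist by simp
qed

end

end

lemma card_orbits_comp_swap:
  assumes rho: "\<forall>k\<in>K. rho k \<in> K" and sw: "\<forall>k\<in>K. sw k \<in> K" "\<forall>k\<in>K. sw (sw k) = k"
  shows "card (orbit (rho \<circ> sw) ` K) = card (orbit (sw \<circ> rho) ` K)"
proof -
  have conj: "((rho \<circ> sw) ^^ n) (sw x) = sw (((sw \<circ> rho) ^^ n) x)" if "x \<in> K" for x n
  proof (induction n)
    case (Suc n)
    define y where "y = ((sw \<circ> rho) ^^ n) x"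
    have "y \<in> K" unfolding y_def using funpow_in_invariant[of K "sw \<circ> rho"] rho sw that by simp
    then have "rho (sw (sw y)) = sw (sw (rho y))" using sw rho by simp
    with Suc.IH show ?case unfolding y_def comp_def by simp
  qed simp
  have "sw ` K = K" using sw by force
  then have "orbit (rho \<circ> sw) ` K = (\<lambda>x. orbit (rho \<circ> sw) (sw x)) ` K" by (metis image_image)
  also have "\<dots> = image sw ` orbit (sw \<circ> rho) ` K"
    unfolding orbit_def image_image using conj by (auto intro!: image_cong)
  finally have "orbit (rho \<circ> sw) ` K = image sw ` orbit (sw \<circ> rho) ` K" .
  moreover have "inj_on (image sw) (orbit (sw \<circ> rho) ` K)"
  proof (rule inj_on_image, rule inj_on_subset)
    show "inj_on sw K" using sw by (metis inj_onI)
    show "\<Union> (orbit (sw \<circ> rho) ` K) \<subseteq> K"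
      using orbit_subset_invariant[of K "sw \<circ> rho"] rho sw by auto
  qed
  ultimately show ?thesis by (simp add: card_image)
qed

section \<open>Weighted sums over subsets and the recursion for F\<close>

definition subset_weight ::
    "('c \<Rightarrow> 'a::comm_monoid_mult) \<Rightarrow> ('c \<Rightarrow> 'a) \<Rightarrow> 'c set \<Rightarrow> 'c set \<Rightarrow> 'a" where
  "subset_weight p q X T = (\<Prod>c\<in>X. if c \<in> T then p c else q c)"

lemma subset_weight_remove:
  assumes "finite X" "c \<in> X" "T \<subseteq> X - {c}"
  shows "subset_weight p q X T = q c * subset_weight p q (X - {c}) T"
    and "subset_weight p q X (insert c T) = p c * subset_weight p q (X - {c}) T"
proof -
  have "c \<notin> T" using assms(3) by blast
  then show "subset_weight p q X T = q c * subset_weight p q (X - {c}) T"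
    unfolding subset_weight_def by (simp add: prod.remove[OF assms(1,2)])
  have "(\<Prod>c'\<in>X - {c}. if c' \<in> insert c T then p c' else q c') = subset_weight p q (X - {c}) T"
    unfolding subset_weight_def by (rule prod.cong) auto
  then show "subset_weight p q X (insert c T) = p c * subset_weight p q (X - {c}) T"
    unfolding subset_weight_def by (simp add: prod.remove[OF assms(1,2)])
qed

lemma sum_Pow_subset_weight_remove:
  fixes P :: "'c set \<Rightarrow> 'a::comm_semiring_1"
  assumes "finite X" "c \<in> X"
  shows "(\<Sum>T\<in>Pow X. subset_weight p q X T * P T) =
    q c * (\<Sum>T\<in>Pow (X - {c}). subset_weight p q (X - {c}) T * P T) +
    p c * (\<Sum>T\<in>Pow (X - {c}). subset_weight p q (X - {c}) T * P (insert c T))"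
proof -
  have "Pow X = Pow (X - {c}) \<union> insert c ` Pow (X - {c})"
    using Pow_insert[of c "X - {c}"] assms(2) by (simp add: insert_absorb)
  moreover have "Pow (X - {c}) \<inter> insert c ` Pow (X - {c}) = {}" by blast
  moreover have "inj_on (insert c) (Pow (X - {c}))" by (rule inj_onI) blast
  ultimately have "(\<Sum>T\<in>Pow X. subset_weight p q X T * P T) =
      (\<Sum>T\<in>Pow (X - {c}). subset_weight p q X T * P T) +
      (\<Sum>T\<in>Pow (X - {c}). subset_weight p q X (insert c T) * P (insert c T))"
    using assms(1) by (simp add: sum.union_disjoint sum.reindex)
  moreover have "(\<Sum>T\<in>Pow (X - {c}). subset_weight p q X T * P T) =
      q c * (\<Sum>T\<in>Pow (X - {c}). subset_weight p q (X - {c}) T * P T)"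
    unfolding sum_distrib_left
    by (rule sum.cong[OF refl], subst subset_weight_remove(1)[OF assms]) (auto simp: mult.assoc)
  moreover have "(\<Sum>T\<in>Pow (X - {c}). subset_weight p q X (insert c T) * P (insert c T)) =
      p c * (\<Sum>T\<in>Pow (X - {c}). subset_weight p q (X - {c}) T * P (insert c T))"
    unfolding sum_distrib_left
    by (rule sum.cong[OF refl], subst subset_weight_remove(2)[OF assms]) (auto simp: mult.assoc)
  ultimately show ?thesis by simp
qed

lemma Fm_unmarked:
  assumes "finite (shalfs G)" "\<not> shalfs G \<subseteq> M" "h = (SOME h. h \<in> shalfs G - M)"
  shows "Fm A B d G M =
    (if ssign G h then B * Fm A B d (delete_edge G h) M + A * Fm A B d G (M \<union> {h, sopp G h})
     else A * Fm A B d (delete_edge G h) M + B * Fm A B d G (M \<union> {h, sopp G h}))"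
  by (subst Fm.simps) (simp only: assms if_False simp_thms Let_def)

section \<open>Colored corners of a diagram\<close>

definition opposite_corner :: "'c \<times> nat \<Rightarrow> 'c \<times> nat" where
  "opposite_corner = (\<lambda>(c, k). (c, (k + 2) mod 4))"

lemma fst_opposite_corner [simp]: "fst (opposite_corner x) = fst x"
  unfolding opposite_corner_def by (cases x) simp

lemma less_4_cases: "(j::nat) < 4 \<Longrightarrow> j = 0 \<or> j = 1 \<or> j = 2 \<or> j = 3"
  by auto

lemma ends_iff: "x \<in> ends D \<longleftrightarrow> fst x \<in> cross D \<and> snd x < 4"
  unfolding ends_def by (cases x) auto

lemma opposite_corner_ends: "x \<in> ends D \<Longrightarrow> opposite_corner x \<in> ends D"
  unfolding opposite_corner_def ends_iff by (cases x) simp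

lemma opposite_corner_opposite_corner: "x \<in> ends D \<Longrightarrow> opposite_corner (opposite_corner x) = x"
  unfolding opposite_corner_def ends_iff by (cases x) (auto dest!: less_4_cases)

lemma smooth_ends: "x \<in> ends D \<Longrightarrow> smooth S x \<in> ends D"
  unfolding smooth_def ends_iff by (cases x) (auto dest!: less_4_cases)

lemma smooth_smooth: "x \<in> ends D \<Longrightarrow> smooth S (smooth S x) = x"
  unfolding smooth_def ends_iff by (cases x) (auto dest!: less_4_cases)

lemma colored_iff: "colored col (c, k) \<longleftrightarrow> (even k \<longleftrightarrow> col c)"
  unfolding colored_def by simp

lemma colored_opposite_corner: "x \<in> ends D \<Longrightarrow> colored col (opposite_corner x) = colored col x"
  unfolding opposite_corner_def ends_iff colored_def by (cases x) (auto dest!: less_4_cases)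

locale tait_diagram =
  fixes D :: "'c vdiag" and col :: "'c \<Rightarrow> bool"
  assumes diagram: "virtual_link_diagram D" and coloring: "checkerboard D col"
begin

abbreviation H where "H \<equiv> tait_halfs D col"
abbreviation nxt where "nxt \<equiv> tait_next D"

lemma finite_cross: "finite (cross D)"
  using diagram unfolding virtual_link_diagram_def by blast

lemma lnk_ends: "x \<in> ends D \<Longrightarrow> lnk D x \<in> ends D"
  using diagram unfolding virtual_link_diagram_def by blast

lemma lnk_lnk: "x \<in> ends D \<Longrightarrow> lnk D (lnk D x) = x"
  using diagram unfolding virtual_link_diagram_def by blast

lemma H_iff: "x \<in> H \<longleftrightarrow> x \<in> ends D \<and> colored col x"
  unfolding tait_halfs_def by blast

lemma H_ends: "H \<subseteq> ends D"
  unfolding tait_halfs_def by blast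

lemma nxt_lnk: "nxt x = (fst (lnk D x), (snd (lnk D x) + 3) mod 4)"
  unfolding tait_next_def ..

lemma colored_lnk: assumes "x \<in> ends D" shows "colored col (lnk D x) \<longleftrightarrow> \<not> colored col x"
proof -
  obtain c j where cj: "lnk D x = (c, j)" by fastforce
  have "j < 4" using lnk_ends[OF assms] cj ends_iff by fastforce
  then have "even ((j + 3) mod 4) \<longleftrightarrow> odd j" by (auto dest!: less_4_cases)
  moreover have "colored col x = colored col (c, (j + 3) mod 4)"
    using coloring assms cj unfolding checkerboard_def by fastforce
  ultimately show ?thesis using cj by (simp add: colored_iff)
qed

lemma opposite_corner_H: "x \<in> H \<Longrightarrow> opposite_corner x \<in> H"
  using H_iff opposite_corner_ends colored_opposite_corner by blast

sublocale perm_on H nxt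
proof
  have "finite (ends D)" unfolding ends_def using finite_cross by simp
  then show "finite H" using H_ends finite_subset by blast
  have nxt_ends: "nxt x \<in> ends D" if "x \<in> ends D" for x
    using lnk_ends[OF that] unfolding nxt_lnk ends_iff by simp
  show "\<forall>x\<in>H. nxt x \<in> H"
  proof
    fix x assume "x \<in> H"
    then have x: "x \<in> ends D" "colored col x" using H_iff by blast+
    moreover have "colored col (nxt x) = colored col x"
      using coloring x(1) unfolding checkerboard_def tait_next_def by simp
    ultimately show "nxt x \<in> H" using H_iff nxt_ends by blast
  qed
  show "inj_on nxt H"
  proof (rule inj_onI)
    fix x y assume xy: "x \<in> H" "y \<in> H" "nxt x = nxt y"
    then have ends: "lnk D x \<in> ends D" "lnk D y \<in> ends D" using H_ends lnk_ends by blast+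
    have "snd (lnk D x) = snd (lnk D y)"
      using xy(3) ends unfolding nxt_lnk ends_iff by (auto dest!: less_4_cases)
    then have "lnk D x = lnk D y" using xy(3) unfolding nxt_lnk by (simp add: prod_eq_iff)
    then show "x = y" using lnk_lnk xy H_ends by (metis subsetD)
  qed
qed

definition halfs_at :: "'c set \<Rightarrow> ('c \<times> nat) set" where
  "halfs_at C = {x \<in> H. fst x \<in> C}"

text \<open>The crossings at which the smoothing chosen by S joins the two colored corners.\<close>
definition state_edges :: "'c set \<Rightarrow> 'c set" where
  "state_edges S = {c \<in> cross D. col c = (c \<in> S)}"

definition state_step :: "'c set \<Rightarrow> 'c \<times> nat \<Rightarrow> 'c \<times> nat" where
  "state_step S x = smooth S (lnk D x)"

definition state_rel :: "'c set \<Rightarrow> (('c \<times> nat) \<times> ('c \<times> nat)) set" where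
  "state_rel S = {(x, lnk D x) | x. x \<in> ends D} \<union> {(x, smooth S x) | x. x \<in> ends D}"

lemma halfs_at_H: "halfs_at C \<subseteq> H"
  unfolding halfs_at_def by blast

lemma opposite_corner_halfs_at: "\<forall>x\<in>halfs_at C. opposite_corner x \<in> halfs_at C"
  unfolding halfs_at_def using opposite_corner_H by simp

lemma opposite_corner_involution: "\<forall>x\<in>halfs_at C. opposite_corner (opposite_corner x) = x"
  using opposite_corner_opposite_corner halfs_at_H H_ends by blast

text \<open>Following a state circle from a colored corner along the arc and through the smoothing
  lands on the next colored corner, or on its opposite when the smoothing joins the two colored
  corners, i.e. when the crossing is an edge of the corresponding spanning subgraph.\<close>
lemma state_step_twist:
  assumes "x \<in> H"
  shows "state_step S x =
    (if nxt x \<in> halfs_at (state_edges S) then opposite_corner (nxt x) else nxt x)"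
proof -
  obtain c j where cj: "lnk D x = (c, j)" by fastforce
  have "j < 4" "c \<in> cross D" using lnk_ends cj assms H_ends ends_iff by fastforce+
  have nxt_x: "nxt x = (c, (j + 3) mod 4)" using cj unfolding nxt_lnk by simp
  then have "even ((j + 3) mod 4) = col c" using closed assms H_iff colored_iff by metis
  moreover have "nxt x \<in> halfs_at (state_edges S) \<longleftrightarrow> col c = (c \<in> S)"
    using nxt_x closed assms \<open>c \<in> cross D\<close> unfolding halfs_at_def state_edges_def by auto
  ultimately show ?thesis
    unfolding state_step_def cj nxt_x using \<open>j < 4\<close>
    by (cases "col c"; cases "c \<in> S") (auto simp: smooth_def opposite_corner_def dest!: less_4_cases)
qed

lemma perm_on_state_step: "perm_on H (state_step S)"
  by (rule perm_on_twist[OF halfs_at_H opposite_corner_halfs_at opposite_corner_involution])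
    (use state_step_twist in blast)

lemma sym_state_rel: "sym (state_rel S)"
proof (rule symI)
  fix a b assume "(a, b) \<in> state_rel S"
  then consider "a \<in> ends D" "b = lnk D a" | "a \<in> ends D" "b = smooth S a"
    unfolding state_rel_def by blast
  then show "(b, a) \<in> state_rel S"
  proof cases
    case 1
    have "b \<in> ends D" "a = lnk D b" using lnk_ends[OF 1(1)] lnk_lnk[OF 1(1)] unfolding 1(2) by simp_all
    then show ?thesis unfolding state_rel_def by blast
  next
    case 2
    have "b \<in> ends D" "a = smooth S b"
      using smooth_ends[OF 2(1)] smooth_smooth[OF 2(1)] unfolding 2(2) by simp_all
    then show ?thesis unfolding state_rel_def by blast
  qed
qed

lemma orbit_state_step_subset_class:
  assumes "x \<in> H" shows "orbit (state_step S) x \<subseteq> (state_rel S)\<^sup>* `` {x}"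
proof -
  have "(x, (state_step S ^^ n) x) \<in> (state_rel S)\<^sup>*" for n
  proof (induction n)
    case (Suc n)
    let ?y = "(state_step S ^^ n) x"
    have "?y \<in> ends D"
      using funpow_in_invariant[OF perm_on.closed[OF perm_on_state_step] assms] H_ends by blast
    then have "(?y, lnk D ?y) \<in> state_rel S" "(lnk D ?y, state_step S ?y) \<in> state_rel S"
      using lnk_ends unfolding state_rel_def state_step_def by blast+
    then show ?case using Suc by (simp add: rtrancl_into_rtrancl)
  qed simp
  then show ?thesis unfolding orbit_def by blast
qed

lemma class_subset_orbit_state_step:
  assumes "x \<in> H"
  shows "(state_rel S)\<^sup>* `` {x} \<subseteq> orbit (state_step S) x \<union> lnk D ` orbit (state_step S) x"
proof
  interpret sigma: perm_on H "state_step S" by (rule perm_on_state_step)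
  let ?O = "orbit (state_step S) x"
  have O_ends: "?O \<subseteq> ends D" using orbit_subset_invariant[OF sigma.closed assms] H_ends by blast
  fix y assume "y \<in> (state_rel S)\<^sup>* `` {x}"
  then have "(x, y) \<in> (state_rel S)\<^sup>*" by simp
  then show "y \<in> ?O \<union> lnk D ` ?O"
  proof (induction rule: rtrancl_induct)
    case base then show ?case by (rule UnI1, rule orbit_self)
  next
    case (step a b)
    from step(2) consider "b = lnk D a" | "b = smooth S a" unfolding state_rel_def by blast
    then show ?case
    proof cases
      case 1
      then show ?thesis using step(3) lnk_lnk O_ends by auto
    next
      case 2
      show ?thesis
      proof (cases "a \<in> ?O")
        case True
        then obtain w where w: "w \<in> ?O" "a = smooth S (lnk D w)"
          using sigma.image_orbit[OF assms] unfolding state_step_def by blast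
        then have "lnk D w \<in> ends D" using lnk_ends O_ends by blast
        then have "b = lnk D w" using 2 w(2) smooth_smooth by simp
        then show ?thesis using w(1) by blast
      next
        case False
        then obtain z where "z \<in> ?O" "a = lnk D z" using step(3) by blast
        then have "b = state_step S z" using 2 unfolding state_step_def by simp
        then show ?thesis using sigma.image_orbit[OF assms] \<open>z \<in> ?O\<close> by blast
      qed
    qed
  qed
qed

lemma class_inter_H:
  assumes "x \<in> H" shows "(state_rel S)\<^sup>* `` {x} \<inter> H = orbit (state_step S) x"
proof
  let ?O = "orbit (state_step S) x"
  have O_H: "?O \<subseteq> H" using orbit_subset_invariant[OF perm_on.closed[OF perm_on_state_step] assms] .
  have "lnk D ` ?O \<inter> H = {}" using O_H colored_lnk H_iff by blast
  then show "(state_rel S)\<^sup>* `` {x} \<inter> H \<subseteq> ?O"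
    using class_subset_orbit_state_step[OF assms, of S] by blast
  show "?O \<subseteq> (state_rel S)\<^sup>* `` {x} \<inter> H"
    using orbit_state_step_subset_class[OF assms, of S] O_H by (rule Int_greatest)
qed

lemma state_class_eq:
  assumes "(a, b) \<in> (state_rel S)\<^sup>*" shows "(state_rel S)\<^sup>* `` {a} = (state_rel S)\<^sup>* `` {b}"
proof -
  have "(b, a) \<in> (state_rel S)\<^sup>*" using symD[OF sym_rtrancl[OF sym_state_rel] assms] .
  then show ?thesis using assms by (auto intro: rtrancl_trans)
qed

lemma state_class_representative:
  assumes "X \<in> ends D // (state_rel S)\<^sup>*" shows "\<exists>x\<in>H. X = (state_rel S)\<^sup>* `` {x}"
proof -
  obtain y where y: "y \<in> ends D" "X = (state_rel S)\<^sup>* `` {y}" using assms by (rule quotientE)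
  show ?thesis
  proof (cases "y \<in> H")
    case False
    then have "lnk D y \<in> H" using y(1) colored_lnk lnk_ends H_iff by blast
    moreover have "(y, lnk D y) \<in> (state_rel S)\<^sup>*" using y(1) unfolding state_rel_def by blast
    ultimately show ?thesis using y(2) state_class_eq by blast
  qed (use y in blast)
qed

lemma card_state_classes: "card (ends D // (state_rel S)\<^sup>*) = card (orbit (state_step S) ` H)"
proof (rule bij_betw_same_card[of "\<lambda>X. X \<inter> H"], rule bij_betw_imageI)
  show "inj_on (\<lambda>X. X \<inter> H) (ends D // (state_rel S)\<^sup>*)"
  proof (rule inj_onI)
    fix X X' assume "X \<in> ends D // (state_rel S)\<^sup>*" "X' \<in> ends D // (state_rel S)\<^sup>*"
      and eq: "X \<inter> H = X' \<inter> H"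
    then obtain x x' where x: "x \<in> H" "X = (state_rel S)\<^sup>* `` {x}"
      and x': "x' \<in> H" "X' = (state_rel S)\<^sup>* `` {x'}"
      using state_class_representative by meson
    then have "x' \<in> X" using eq by blast
    then show "X = X'" using x x' state_class_eq by simp
  qed
  show "(\<lambda>X. X \<inter> H) ` (ends D // (state_rel S)\<^sup>*) = orbit (state_step S) ` H"
  proof
    show "(\<lambda>X. X \<inter> H) ` (ends D // (state_rel S)\<^sup>*) \<subseteq> orbit (state_step S) ` H"
      using state_class_representative class_inter_H by fastforce
    show "orbit (state_step S) ` H \<subseteq> (\<lambda>X. X \<inter> H) ` (ends D // (state_rel S)\<^sup>*)"
    proof
      fix Q assume "Q \<in> orbit (state_step S) ` H"
      then obtain x where x: "x \<in> H" "Q = orbit (state_step S) x" by blast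
      then have "(state_rel S)\<^sup>* `` {x} \<in> ends D // (state_rel S)\<^sup>*"
        using H_ends by (auto intro: quotientI)
      then show "Q \<in> (\<lambda>X. X \<inter> H) ` (ends D // (state_rel S)\<^sup>*)"
        using class_inter_H[OF x(1)] x(2) by (metis image_eqI)
    qed
  qed
qed

lemma state_circles_orbits: "state_circles D S = card (orbit (state_step S) ` H) + nloops D"
  unfolding state_circles_def card_state_classes[symmetric] state_rel_def ..

definition spanning_subgraph ::
    "'c set \<Rightarrow> ('c \<times> nat \<Rightarrow> 'c \<times> nat) \<Rightarrow> (('c \<times> nat) set + nat, 'c \<times> nat) scg" where
  "spanning_subgraph C rot = (tait_graph D col)\<lparr>shalfs := halfs_at C, srot := rot\<rparr>"

lemma spanning_subgraph_simps:
  "shalfs (spanning_subgraph C rot) = halfs_at C"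
  "srot (spanning_subgraph C rot) = rot"
  "sopp (spanning_subgraph C rot) = opposite_corner"
  "sverts (spanning_subgraph C rot) = Inl ` (orbit nxt ` H) \<union> Inr ` {..<nloops D}"
  "svert (spanning_subgraph C rot) = (\<lambda>h. Inl (orbit nxt h))"
  "ssign (spanning_subgraph C rot) h = col (fst h)"
  unfolding spanning_subgraph_def tait_graph_def opposite_corner_def
  by (simp_all add: A_corners_def colored_def split: prod.split)

lemma isolated_vertices_spanning_subgraph:
  "card {v \<in> sverts (spanning_subgraph C rot). \<forall>h\<in>halfs_at C. svert (spanning_subgraph C rot) h \<noteq> v}
    = card {Q \<in> orbit nxt ` H. Q \<inter> halfs_at C = {}} + nloops D"
proof -
  let ?K = "halfs_at C"
  let ?avoiding = "{Q \<in> orbit nxt ` H. Q \<inter> ?K = {}}"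
  have avoid_iff: "(\<forall>h\<in>?K. orbit nxt h \<noteq> orbit nxt x) \<longleftrightarrow> orbit nxt x \<inter> ?K = {}"
    if "x \<in> H" for x
  proof
    assume distinct: "\<forall>h\<in>?K. orbit nxt h \<noteq> orbit nxt x"
    show "orbit nxt x \<inter> ?K = {}"
    proof (rule equals0I)
      fix h assume "h \<in> orbit nxt x \<inter> ?K"
      then show False using orbit_eq[OF that, of h] distinct by blast
    qed
  next
    assume "orbit nxt x \<inter> ?K = {}"
    then show "\<forall>h\<in>?K. orbit nxt h \<noteq> orbit nxt x" using orbit_self[of _ nxt] by blast
  qed
  have "{v \<in> sverts (spanning_subgraph C rot). \<forall>h\<in>?K. svert (spanning_subgraph C rot) h \<noteq> v}
      = Inl ` ?avoiding \<union> Inr ` {..<nloops D}"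
  proof (rule set_eqI)
    fix v
    show "v \<in> {v \<in> sverts (spanning_subgraph C rot). \<forall>h\<in>?K. svert (spanning_subgraph C rot) h \<noteq> v}
      \<longleftrightarrow> v \<in> Inl ` ?avoiding \<union> Inr ` {..<nloops D}"
    proof (cases v)
      case (Inl Q)
      have "(Q \<in> orbit nxt ` H \<and> (\<forall>h\<in>?K. orbit nxt h \<noteq> Q)) \<longleftrightarrow> Q \<in> ?avoiding"
        using avoid_iff by blast
      then show ?thesis using Inl unfolding spanning_subgraph_simps by blast
    qed (auto simp: spanning_subgraph_simps)
  qed
  moreover have "finite ?avoiding" using finite_domain by simp
  then have "card (Inl ` ?avoiding \<union> Inr ` {..<nloops D}) = card ?avoiding + nloops D"
    by (subst card_Un_disjoint) (auto simp: card_image)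
  ultimately show ?thesis by simp
qed

lemma bc_spanning_subgraph:
  assumes "\<forall>h\<in>halfs_at C. rot h = induced_rot nxt (halfs_at C) h"
  shows "bc (spanning_subgraph C rot) =
    card (orbit (induced_rot nxt (halfs_at C) \<circ> opposite_corner) ` halfs_at C)
    + card {Q \<in> orbit nxt ` H. Q \<inter> halfs_at C = {}} + nloops D"
proof -
  let ?K = "halfs_at C"
  interpret rho: perm_on ?K "induced_rot nxt ?K" using perm_on_induced_rot[OF halfs_at_H] .
  have "orbit (rot \<circ> opposite_corner) ` ?K = orbit (induced_rot nxt ?K \<circ> opposite_corner) ` ?K"
    by (rule image_cong[OF refl], rule orbit_cong_invariant[of ?K])
      (use assms rho.closed opposite_corner_halfs_at in auto)
  then show ?thesis
    unfolding bc_def spanning_subgraph_simps(1-3) isolated_vertices_spanning_subgraph by simp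
qed

abbreviation tait_subgraph :: "'c set \<Rightarrow> (('c \<times> nat) set + nat, 'c \<times> nat) scg" where
  "tait_subgraph C \<equiv> spanning_subgraph C (induced_rot nxt (halfs_at C))"

lemma state_circles_tait_subgraph:
  "state_circles D S = bc (tait_subgraph (state_edges S))"
proof -
  let ?K = "halfs_at (state_edges S)"
  interpret rho: perm_on ?K "induced_rot nxt ?K" using perm_on_induced_rot[OF halfs_at_H] .
  have "card (orbit (state_step S) ` H) =
      card (orbit (opposite_corner \<circ> induced_rot nxt ?K) ` ?K)
      + card {Q \<in> orbit nxt ` H. Q \<inter> ?K = {}}"
    by (rule card_orbits_twist[OF halfs_at_H opposite_corner_halfs_at opposite_corner_involution])
      (use state_step_twist in blast)
  also have "card (orbit (opposite_corner \<circ> induced_rot nxt ?K) ` ?K)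
      = card (orbit (induced_rot nxt ?K \<circ> opposite_corner) ` ?K)"
    using card_orbits_comp_swap[OF rho.closed opposite_corner_halfs_at opposite_corner_involution] ..
  finally show ?thesis
    unfolding state_circles_orbits by (simp add: bc_spanning_subgraph)
qed

lemma finite_halfs_at: "finite (halfs_at C)"
  using finite_subset[OF halfs_at_H finite_domain] .

lemma halfs_at_mono: "C' \<subseteq> C \<Longrightarrow> halfs_at C' \<subseteq> halfs_at C"
  unfolding halfs_at_def by auto

lemma halfs_at_empty: "halfs_at {} = {}"
  unfolding halfs_at_def by simp

lemma halfs_at_cross: "halfs_at (cross D) = H"
proof -
  have "\<forall>x\<in>H. fst x \<in> cross D" using H_ends ends_iff by blast
  then show ?thesis unfolding halfs_at_def by blast
qed

lemma H_same_crossing: assumes "h \<in> H" shows "{x \<in> H. fst x = fst h} = {h, opposite_corner h}"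
proof
  obtain c k where h: "h = (c, k)" by fastforce
  have k: "k < 4" "even k \<longleftrightarrow> col c"
    using assms unfolding h by (simp_all add: H_iff ends_iff colored_iff)
  show "{x \<in> H. fst x = fst h} \<subseteq> {h, opposite_corner h}"
  proof
    fix x assume x: "x \<in> {x \<in> H. fst x = fst h}"
    obtain k' where x_eq: "x = (c, k')" using x h by (cases x) simp
    have "k' < 4" "even k' \<longleftrightarrow> col c"
      using x unfolding x_eq by (simp_all add: H_iff ends_iff colored_iff)
    then have "k' = k \<or> k' = (k + 2) mod 4" using k by (auto dest!: less_4_cases)
    then show "x \<in> {h, opposite_corner h}" using h x_eq by (auto simp: opposite_corner_def)
  qed
  show "{h, opposite_corner h} \<subseteq> {x \<in> H. fst x = fst h}" using assms opposite_corner_H by simp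
qed

lemma halfs_at_insert:
  assumes "h \<in> H" shows "halfs_at Cm \<union> {h, opposite_corner h} = halfs_at (insert (fst h) Cm)"
proof -
  have "halfs_at (insert (fst h) Cm) = halfs_at Cm \<union> {x \<in> H. fst x = fst h}"
    unfolding halfs_at_def by blast
  then show ?thesis using H_same_crossing[OF assms] by simp
qed

lemma halfs_at_remove:
  assumes "h \<in> halfs_at C" shows "halfs_at C - {h, opposite_corner h} = halfs_at (C - {fst h})"
proof -
  have "halfs_at (C - {fst h}) = halfs_at C - {x \<in> H. fst x = fst h}"
    unfolding halfs_at_def by blast
  moreover have "h \<in> H" using assms halfs_at_H by blast
  ultimately show ?thesis using H_same_crossing by simp
qed

lemma halfs_at_subset_iff: "C \<subseteq> cross D \<Longrightarrow> halfs_at C \<subseteq> halfs_at C' \<longleftrightarrow> C \<subseteq> C'"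
proof
  assume C: "C \<subseteq> cross D" and sub: "halfs_at C \<subseteq> halfs_at C'"
  show "C \<subseteq> C'"
  proof
    fix c assume "c \<in> C"
    then have "(c, if col c then 0 else 1) \<in> halfs_at C"
      using C by (auto simp: halfs_at_def H_iff ends_iff colored_iff)
    then show "c \<in> C'" using sub unfolding halfs_at_def by auto
  qed
qed (rule halfs_at_mono)

lemma delete_edge_spanning_subgraph:
  assumes "h \<in> halfs_at C"
  shows "delete_edge (spanning_subgraph C rot) h =
    spanning_subgraph (C - {fst h}) (induced_rot rot (halfs_at (C - {fst h})))"
  unfolding delete_edge_def spanning_subgraph_simps halfs_at_remove[OF assms]
  by (simp add: spanning_subgraph_def)

lemma induced_rot_spanning_subgraph_delete:
  assumes rot: "\<forall>h\<in>halfs_at C. rot h = induced_rot nxt (halfs_at C) h" and "C' \<subseteq> C"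
  shows "\<forall>h\<in>halfs_at C'. induced_rot rot (halfs_at C') h = induced_rot nxt (halfs_at C') h"
proof
  fix h assume h: "h \<in> halfs_at C'"
  interpret rho: perm_on "halfs_at C" "induced_rot nxt (halfs_at C)"
    using perm_on_induced_rot[OF halfs_at_H] .
  have hC: "h \<in> halfs_at C" using h halfs_at_mono[OF assms(2)] by blast
  have "induced_rot rot (halfs_at C') h = induced_rot (induced_rot nxt (halfs_at C)) (halfs_at C') h"
    by (rule induced_rot_cong_invariant[of "halfs_at C"]) (use rot rho.closed hC in auto)
  also have "\<dots> = induced_rot nxt (halfs_at C') h"
    using induced_rot_induced_rot[OF halfs_at_mono[OF assms(2)] halfs_at_H h] .
  finally show "induced_rot rot (halfs_at C') h = induced_rot nxt (halfs_at C') h" .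
qed

text \<open>Since col c is the sign of the edge at c, marking that edge contributes signed_weight A B c
  and deleting it signed_weight B A c.\<close>
abbreviation signed_weight :: "'a::field \<Rightarrow> 'a \<Rightarrow> 'c \<Rightarrow> 'a" where
  "signed_weight A B c \<equiv> if col c then A else B"

text \<open>In the partially expanded graph the edges at crossings of Cm are marked and those outside
  C are deleted; the deletions have left behind a rotation rot agreeing with the induced one.\<close>
lemma Fm_spanning_subgraph:
  fixes A B d :: "'a::field"
  assumes "C \<subseteq> cross D" "Cm \<subseteq> C" "\<forall>h\<in>halfs_at C. rot h = induced_rot nxt (halfs_at C) h"
  shows "Fm A B d (spanning_subgraph C rot) (halfs_at Cm) =
    (\<Sum>T\<in>Pow (C - Cm). subset_weight (signed_weight A B) (signed_weight B A) (C - Cm) T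
       * d powi (int (bc (tait_subgraph (Cm \<union> T))) - 1))"
  using assms
proof (induction "card (C - Cm)" arbitrary: C Cm rot rule: less_induct)
  case less
  let ?G = "spanning_subgraph C rot"
  let ?w = "subset_weight (signed_weight A B) (signed_weight B A)"
  let ?P = "\<lambda>T. d powi (int (bc (tait_subgraph (Cm \<union> T))) - 1)"
  show ?case
  proof (cases "C \<subseteq> Cm")
    case True
    then have "C = Cm" using less.prems(2) by blast
    then show ?thesis
      using less.prems(3) bc_spanning_subgraph[of C] bc_spanning_subgraph[of C rot]
      by (simp add: spanning_subgraph_simps subset_weight_def)
  next
    case False
    then have unmarked: "\<not> shalfs ?G \<subseteq> halfs_at Cm"
      using halfs_at_subset_iff[OF less.prems(1)] by (simp add: spanning_subgraph_simps)
    define h where "h = (SOME h. h \<in> shalfs ?G - halfs_at Cm)"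
    have h: "h \<in> halfs_at C - halfs_at Cm"
      unfolding h_def using unmarked some_in_eq[of "shalfs ?G - halfs_at Cm"]
      by (simp add: spanning_subgraph_simps)
    define c where "c = fst h"
    have c: "c \<in> C - Cm" using h unfolding c_def halfs_at_def by auto
    have finite_X: "finite (C - Cm)" using less.prems(1) finite_cross finite_subset by blast
    have smaller: "card (C - Cm - {c}) < card (C - Cm)" using card_Diff1_less[OF finite_X c] .
    have deleted: "Fm A B d (delete_edge ?G h) (halfs_at Cm) =
      (\<Sum>T\<in>Pow (C - Cm - {c}). ?w (C - Cm - {c}) T * ?P T)"
    proof -
      let ?rot' = "induced_rot rot (halfs_at (C - {c}))"
      have "C - {c} - Cm = C - Cm - {c}" by blast
      moreover have "Fm A B d (spanning_subgraph (C - {c}) ?rot') (halfs_at Cm) =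
          (\<Sum>T\<in>Pow (C - {c} - Cm). ?w (C - {c} - Cm) T * ?P T)"
      proof (rule less.hyps)
        show "card (C - {c} - Cm) < card (C - Cm)" using smaller calculation by simp
        show "C - {c} \<subseteq> cross D" "Cm \<subseteq> C - {c}" using less.prems(1,2) c by auto
        show "\<forall>h\<in>halfs_at (C - {c}). ?rot' h = induced_rot nxt (halfs_at (C - {c})) h"
          using induced_rot_spanning_subgraph_delete[OF less.prems(3)] by blast
      qed
      ultimately show ?thesis
        unfolding delete_edge_spanning_subgraph[OF DiffD1[OF h]] c_def[symmetric] by simp
    qed
    have marked: "Fm A B d ?G (halfs_at Cm \<union> {h, sopp ?G h}) =
      (\<Sum>T\<in>Pow (C - Cm - {c}). ?w (C - Cm - {c}) T * ?P (insert c T))"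
    proof -
      have "halfs_at Cm \<union> {h, sopp ?G h} = halfs_at (insert c Cm)"
        using halfs_at_insert[of h Cm] halfs_at_H h unfolding c_def spanning_subgraph_simps by blast
      moreover have "C - insert c Cm = C - Cm - {c}" by blast
      moreover have "Fm A B d ?G (halfs_at (insert c Cm)) =
        (\<Sum>T\<in>Pow (C - insert c Cm). ?w (C - insert c Cm) T
           * d powi (int (bc (tait_subgraph (insert c Cm \<union> T))) - 1))"
      proof (rule less.hyps)
        show "card (C - insert c Cm) < card (C - Cm)" using smaller calculation by simp
      qed (use less.prems c in auto)
      ultimately show ?thesis by simp
    qed
    have sign: "ssign ?G h = col c" unfolding c_def spanning_subgraph_simps ..
    have finite_G: "finite (shalfs ?G)" using finite_halfs_at by (simp add: spanning_subgraph_simps)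
    have "Fm A B d ?G (halfs_at Cm) =
        signed_weight B A c * Fm A B d (delete_edge ?G h) (halfs_at Cm)
        + signed_weight A B c * Fm A B d ?G (halfs_at Cm \<union> {h, sopp ?G h})"
      unfolding Fm_unmarked[OF finite_G unmarked h_def] sign by (simp del: Fm.simps)
    then show ?thesis
      unfolding deleted marked sum_Pow_subset_weight_remove[OF finite_X c] .
  qed
qed

lemma F_tait_graph:
  fixes A B d :: "'a::field"
  shows "F A B d (tait_graph D col) =
    (\<Sum>T\<in>Pow (cross D). subset_weight (signed_weight A B) (signed_weight B A) (cross D) T
       * d powi (int (bc (tait_subgraph T)) - 1))"
proof -
  have "tait_graph D col = spanning_subgraph (cross D) nxt"
    unfolding spanning_subgraph_def halfs_at_cross by (simp add: tait_graph_def)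
  moreover have "\<forall>h\<in>halfs_at (cross D). nxt h = induced_rot nxt (halfs_at (cross D)) h"
    using induced_rot_eq_apply closed unfolding halfs_at_cross by metis
  ultimately show ?thesis
    unfolding F_def using Fm_spanning_subgraph[of "cross D" "{}" nxt A B d] halfs_at_empty by simp
qed

lemma state_edges_subset: "state_edges S \<subseteq> cross D"
  unfolding state_edges_def by blast

lemma state_edges_state_edges: "S \<in> Pow (cross D) \<Longrightarrow> state_edges (state_edges S) = S"
  unfolding state_edges_def by auto

lemma subset_weight_state_edges:
  assumes "S \<in> Pow (cross D)"
  shows "subset_weight (signed_weight A B) (signed_weight B A) (cross D) (state_edges S)
    = A ^ card S * B ^ card (cross D - S)"
proof -
  have "subset_weight (signed_weight A B) (signed_weight B A) (cross D) (state_edges S)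
      = (\<Prod>c\<in>cross D. if c \<in> S then A else B)"
    unfolding subset_weight_def state_edges_def by (rule prod.cong) auto
  also have "\<dots> = (\<Prod>c\<in>cross D \<inter> S. A) * (\<Prod>c\<in>cross D \<inter> - S. B)"
    using prod.If_cases[OF finite_cross, of "\<lambda>c. c \<in> S" "\<lambda>_. A" "\<lambda>_. B"] by simp
  finally show ?thesis using assms by (simp add: Int_absorb1 Diff_eq[symmetric])
qed

end

theorem proposition4p4:
  fixes D :: "'c vdiag" and col :: "'c \<Rightarrow> bool" and A B d :: "'a::field"
  assumes "virtual_link_diagram D"
    and "checkerboard D col"
  shows "bracket D A B d = F A B d (tait_graph D col)"
proof -
  interpret tait_diagram D col using assms by unfold_locales
  have "bracket D A B d = (\<Sum>S\<in>Pow (cross D).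
      subset_weight (signed_weight A B) (signed_weight B A) (cross D) (state_edges S)
      * d powi (int (bc (tait_subgraph (state_edges S))) - 1))"
    unfolding bracket_def state_circles_tait_subgraph
    by (rule sum.cong) (simp_all add: subset_weight_state_edges)
  also have "\<dots> = (\<Sum>T\<in>Pow (cross D).
      subset_weight (signed_weight A B) (signed_weight B A) (cross D) T
      * d powi (int (bc (tait_subgraph T)) - 1))"
    by (rule sum.reindex_bij_witness[where i=state_edges and j=state_edges])
      (simp_all add: state_edges_subset state_edges_state_edges)
  also have "\<dots> = F A B d (tait_graph D col)"
    by (rule F_tait_graph[symmetric])
  finally show ?thesis .
qed

end
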